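(* Let $\mathbf v\in\mathbb R^{n\times m}$ have all entries nonzero (strictly negative), and identify bipartite graphs on $([n],[m])$ with bipartite graphs on $([m],[n])$ in the natural way. Then $\mathrm{MWW}_{\text{non-lonely}}(\mathbf v)=\mathrm{MWW}_{\text{non-lonely}}(\mathbf v^T)$.
   Context: For a matrix $\mathbf w\in\mathbb R^{k\times l}_{<0}$ (rows = "agents" $[k]$, columns = "items" $[l]$) and $\tau\in\mathbb R^k_{>0}$, $G_\tau(\mathbf w)$ is the bipartite graph on $([k],[l])$ with edge $(i,j)$ iff $\tau_i|w_{i,j}|\le\tau_{i'}|w_{i',j}|$ for all $i'\in[k]$; $\mathrm{MWW}(\mathbf w)=\{G_\tau(\mathbf w):\tau\in\mathbb R^k_{>0}\}$. $\mathrm{MWW}_{\text{non-lonely}}(\mathbf w)$ is the set of graphs in $\mathrm{MWW}(\mathbf w)$ in which every row-vertex (agent) $i\in[k]$ is adjacent to at least one item. $\mathbf v^T$ is the transpose, in which the roles of agents and chores are exchanged. *)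

theory Defs
  imports Complex_Main
begin

text \<open>A k x l matrix is a function nat => nat => real, only entries with
  i < k (agents, indexed 0..<k) and j < l (items, indexed 0..<l) matter.
  A bipartite graph on ([k],[l]) is a set of pairs (agent, item).\<close>

definition G_tau :: "nat \<Rightarrow> nat \<Rightarrow> (nat \<Rightarrow> nat \<Rightarrow> real) \<Rightarrow> (nat \<Rightarrow> real) \<Rightarrow> (nat \<times> nat) set" where
  "G_tau k l w \<tau> = {(i, j). i < k \<and> j < l \<and>
      (\<forall>i' < k. \<tau> i * \<bar>w i j\<bar> \<le> \<tau> i' * \<bar>w i' j\<bar>)}"

definition MWW :: "nat \<Rightarrow> nat \<Rightarrow> (nat \<Rightarrow> nat \<Rightarrow> real) \<Rightarrow> (nat \<times> nat) set set" where
  "MWW k l w = {G_tau k l w \<tau> | \<tau>. \<forall>i < k. \<tau> i > 0}"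

definition MWW_non_lonely :: "nat \<Rightarrow> nat \<Rightarrow> (nat \<Rightarrow> nat \<Rightarrow> real) \<Rightarrow> (nat \<times> nat) set set" where
  "MWW_non_lonely k l w = {G \<in> MWW k l w. \<forall>i < k. \<exists>j < l. (i, j) \<in> G}"

definition mat_transpose :: "(nat \<Rightarrow> nat \<Rightarrow> real) \<Rightarrow> (nat \<Rightarrow> nat \<Rightarrow> real)" where
  "mat_transpose v = (\<lambda>i j. v j i)"

definition graph_swap :: "(nat \<times> nat) set \<Rightarrow> (nat \<times> nat) set" where
  "graph_swap G = (\<lambda>(a, b). (b, a)) ` G"

end

theory Submission
  imports Defs
begin

text \<open>Given agent weights \<open>\<tau>\<close>, let \<open>\<beta>\<^sub>j = min\<^sub>i \<tau>\<^sub>i |w\<^sub>i\<^sub>j|\<close> be the cost at which item \<open>j\<close>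
  is assigned. Then \<open>\<sigma>\<^sub>j |w\<^sub>i\<^sub>j| \<ge> 1/\<tau>\<^sub>i\<close> for \<open>\<sigma>\<^sub>j = 1/\<beta>\<^sub>j\<close>, with equality exactly on the edges
  of \<open>G\<^sub>\<tau>(w)\<close>. If no agent is lonely, every agent attains this bound, so \<open>G\<^sub>\<sigma>(w\<^sup>T)\<close>
  is the transposed graph; and it is non-lonely because every item is assigned to some
  agent. Transposing twice gives the reverse inclusion.\<close>

definition item_cost :: "nat \<Rightarrow> (nat \<Rightarrow> nat \<Rightarrow> real) \<Rightarrow> (nat \<Rightarrow> real) \<Rightarrow> nat \<Rightarrow> real" where
  "item_cost k w \<tau> j = Min ((\<lambda>i. \<tau> i * \<bar>w i j\<bar>) ` {..<k})"

lemma item_cost_le: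
  assumes "i < k"
  shows "item_cost k w \<tau> j \<le> \<tau> i * \<bar>w i j\<bar>"
  unfolding item_cost_def using assms by (intro Min_le) auto

lemma item_cost_attained:
  assumes "0 < k"
  obtains i where "i < k" "item_cost k w \<tau> j = \<tau> i * \<bar>w i j\<bar>"
proof -
  have "item_cost k w \<tau> j \<in> (\<lambda>i. \<tau> i * \<bar>w i j\<bar>) ` {..<k}"
    unfolding item_cost_def using assms by (intro Min_in) auto
  then show ?thesis using that by auto
qed

lemma item_cost_pos:
  assumes "0 < k" and "\<forall>i<k. \<tau> i > 0" and "\<forall>i<k. w i j \<noteq> 0"
  shows "item_cost k w \<tau> j > 0"
  using assms by (metis item_cost_attained zero_less_abs_iff mult_pos_pos)

lemma mem_G_tau_iff_item_cost:
  assumes "0 < k"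
  shows "(i, j) \<in> G_tau k l w \<tau> \<longleftrightarrow> i < k \<and> j < l \<and> \<tau> i * \<bar>w i j\<bar> = item_cost k w \<tau> j"
proof -
  obtain i' where "i' < k" "item_cost k w \<tau> j = \<tau> i' * \<bar>w i' j\<bar>"
    using item_cost_attained[OF assms] .
  then show ?thesis
    unfolding G_tau_def using item_cost_le[of _ k w \<tau> j] by (auto intro: order.antisym)
qed

lemma G_tau_item_has_agent:
  assumes "0 < k" and "j < l"
  obtains i where "i < k" "(i, j) \<in> G_tau k l w \<tau>"
  using item_cost_attained[OF assms(1)] assms by (metis mem_G_tau_iff_item_cost)

lemma graph_swap_G_tau_non_lonely:
  fixes w :: "nat \<Rightarrow> nat \<Rightarrow> real"
  assumes k: "0 < k" and \<tau>: "\<forall>i<k. \<tau> i > 0" and w: "\<forall>i<k. \<forall>j<l. w i j \<noteq> 0"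
    and non_lonely: "\<forall>i<k. \<exists>j<l. (i, j) \<in> G_tau k l w \<tau>"
  shows "graph_swap (G_tau k l w \<tau>) = G_tau l k (mat_transpose w) (\<lambda>j. 1 / item_cost k w \<tau> j)"
    (is "_ = G_tau l k _ ?\<sigma>")
proof -
  have mem: "(i, j) \<in> G_tau k l w \<tau> \<longleftrightarrow> i < k \<and> j < l \<and> ?\<sigma> j * \<bar>w i j\<bar> = 1 / \<tau> i" for i j
  proof (cases "i < k \<and> j < l")
    case True
    then have "item_cost k w \<tau> j > 0" "\<tau> i > 0" using item_cost_pos k \<tau> w by auto
    then show ?thesis using True by (auto simp: mem_G_tau_iff_item_cost[OF k] field_simps)
  qed (auto simp: G_tau_def)
  have lower: "1 / \<tau> i \<le> ?\<sigma> j * \<bar>w i j\<bar>" if "i < k" "j < l" for i j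
  proof -
    have "item_cost k w \<tau> j > 0" "\<tau> i > 0" using item_cost_pos k \<tau> w that by auto
    with item_cost_le[OF that(1), of w \<tau> j] show ?thesis by (simp add: field_simps)
  qed
  show ?thesis
  proof (intro set_eqI iffI, clarify)
    fix j i assume "(j, i) \<in> graph_swap (G_tau k l w \<tau>)"
    then have "(i, j) \<in> G_tau k l w \<tau>" unfolding graph_swap_def by auto
    then have "i < k" "j < l" "?\<sigma> j * \<bar>w i j\<bar> = 1 / \<tau> i" using mem by blast+
    then show "(j, i) \<in> G_tau l k (mat_transpose w) ?\<sigma>"
      using lower unfolding G_tau_def mat_transpose_def by auto
  next
    fix p assume "p \<in> G_tau l k (mat_transpose w) ?\<sigma>"
    then obtain j i where p: "p = (j, i)" and ij: "i < k" "j < l"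
      and minimal: "\<forall>j'<l. ?\<sigma> j * \<bar>w i j\<bar> \<le> ?\<sigma> j' * \<bar>w i j'\<bar>"
      unfolding G_tau_def mat_transpose_def by auto
    obtain j' where "j' < l" "?\<sigma> j' * \<bar>w i j'\<bar> = 1 / \<tau> i"
      using non_lonely ij mem by blast
    with minimal lower[OF ij] have "(i, j) \<in> G_tau k l w \<tau>"
      using ij mem by (metis order.antisym)
    then show "p \<in> graph_swap (G_tau k l w \<tau>)" unfolding graph_swap_def p by force
  qed
qed

lemma graph_swap_MWW_non_lonely_subset:
  fixes w :: "nat \<Rightarrow> nat \<Rightarrow> real"
  assumes k: "0 < k" and w: "\<forall>i<k. \<forall>j<l. w i j \<noteq> 0"
  shows "graph_swap ` MWW_non_lonely k l w \<subseteq> MWW_non_lonely l k (mat_transpose w)"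
proof clarify
  fix G assume "G \<in> MWW_non_lonely k l w"
  then obtain \<tau> where \<tau>: "\<forall>i<k. \<tau> i > 0" and G: "G = G_tau k l w \<tau>"
    and non_lonely: "\<forall>i<k. \<exists>j<l. (i, j) \<in> G"
    unfolding MWW_non_lonely_def MWW_def by blast
  let ?\<sigma> = "\<lambda>j. 1 / item_cost k w \<tau> j"
  have swap: "graph_swap G = G_tau l k (mat_transpose w) ?\<sigma>"
    using graph_swap_G_tau_non_lonely[OF k \<tau> w] non_lonely G by simp
  have "\<forall>j<l. ?\<sigma> j > 0" using item_cost_pos[OF k \<tau>] w by simp
  moreover have "\<forall>j<l. \<exists>i<k. (j, i) \<in> graph_swap G"
    using G_tau_item_has_agent[OF k] unfolding G graph_swap_def by (metis pair_imageI)
  ultimately show "graph_swap G \<in> MWW_non_lonely l k (mat_transpose w)"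
    unfolding MWW_non_lonely_def MWW_def swap by blast
qed

lemma graph_swap_graph_swap [simp]: "graph_swap (graph_swap G) = G"
  unfolding graph_swap_def by (auto simp: image_iff)

lemma mat_transpose_mat_transpose [simp]: "mat_transpose (mat_transpose v) = v"
  unfolding mat_transpose_def by simp

theorem proposition3:
  fixes n m :: nat and v :: "nat \<Rightarrow> nat \<Rightarrow> real"
  assumes "n \<ge> 1" and "m \<ge> 1"
    and "\<forall>i < n. \<forall>j < m. v i j < 0"
  shows "graph_swap ` MWW_non_lonely n m v = MWW_non_lonely m n (mat_transpose v)"
proof
  have v: "\<forall>i<n. \<forall>j<m. v i j \<noteq> 0" and vT: "\<forall>j<m. \<forall>i<n. mat_transpose v j i \<noteq> 0"
    using assms(3) unfolding mat_transpose_def by (metis less_irrefl)+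
  show "graph_swap ` MWW_non_lonely n m v \<subseteq> MWW_non_lonely m n (mat_transpose v)"
    using graph_swap_MWW_non_lonely_subset assms(1) v by simp
  have reverse: "graph_swap ` MWW_non_lonely m n (mat_transpose v) \<subseteq> MWW_non_lonely n m v"
    using graph_swap_MWW_non_lonely_subset[of m n "mat_transpose v"] assms(2) vT by simp
  show "MWW_non_lonely m n (mat_transpose v) \<subseteq> graph_swap ` MWW_non_lonely n m v"
  proof
    fix H assume "H \<in> MWW_non_lonely m n (mat_transpose v)"
    with reverse have "graph_swap H \<in> MWW_non_lonely n m v" by blast
    then show "H \<in> graph_swap ` MWW_non_lonely n m v"
      using graph_swap_graph_swap[of H] by (metis image_eqI)
  qed
qed

end
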